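(* Let $d\ge 2$ and let $P\subset\mathbb{R}^d$ be a generic convex simplicial $d$-dimensional polytope. Then $P$ has at least $d+1$ BM-ears, i.e. the number of Delaunay BM-ears of $P$ plus the number of upper Delaunay BM-ears of $P$ is at least $d+1$.
   Context: $P$ is generic if no $d+2$ of its vertices lie on a common $(d-1)$-dimensional sphere and $P$ is not a $d$-simplex. Let $V$ be the vertex set of $P$ and $f:\mathbb{R}^d\to\mathbb{R}^{d+1}$, $f(x_1,\dots,x_d)=(x_1,\dots,x_d,x_1^2+\dots+x_d^2)$. Let $P'$ be the convex hull of $f(V)$; it is a $(d+1)$-dimensional simplicial polytope with vertex set $f(V)$, and no facet of $P'$ has an outer normal with zero last coordinate. A facet of $P'$ is lower if its outer normal has negative last coordinate and upper if it is positive. The orthogonal projections (forgetting the last coordinate) of the lower facets form the Delaunay triangulation $DT(P)$ of $P$ (the simplices with vertices in $V$ whose circumsphere has no vertex of $P$ inside), and those of the upper facets form the upper Delaunay triangulation $UDT(P)$ (simplices whose circumsphere has all other vertices of $P$ inside). A facet $F$ of $P'$ is visible from a point $A$ if $A$ and $P'$ lie in opposite open half-spaces of the hyperplane $\mathrm{aff}(F)$. A simplex of $DT(P)$ is a Delaunay BM-ear if it is the projection of a lower facet $F$ of $P'$ that is the last facet of a Bruggesser–Mani shelling of the complex of lower facets, i.e. there exist a point $A\in\mathbb{R}^{d+1}$ from which exactly the lower facets of $P'$ are visible and a point $O$ in the interior of $P'$ such that the segment $OA$ meets the hyperplanes spanned by the lower facets in distinct points and $\mathrm{aff}(F)$ is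 the last of them met when moving from $O$ to $A$. Upper Delaunay BM-ears are defined in the same way using upper facets, $UDT(P)$, and points $A$ from which exactly the upper facets of $P'$ are visible. A BM-ear is a Delaunay BM-ear or an upper Delaunay BM-ear. *)

theory Defs
  imports "HOL-Analysis.Analysis"
begin

text \<open>R^d is modelled by a euclidean space 'a with DIM('a) = d; R^(d+1) by 'a \<times> real,
  the last coordinate being the real component.\<close>

definition lift :: "'a::euclidean_space \<Rightarrow> 'a \<times> real" where
  "lift x = (x, (norm x)\<^sup>2)"

definition lifted_polytope :: "'a::euclidean_space set \<Rightarrow> ('a \<times> real) set" where
  "lifted_polytope V = convex hull (lift ` V)"

definition generic_simplicial_polytope :: "'a::euclidean_space set \<Rightarrow> bool" where
  "generic_simplicial_polytope V \<longleftrightarrow>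
     finite V \<and>
     V = {v. v extreme_point_of (convex hull V)} \<and>
     aff_dim (convex hull V) = int DIM('a) \<and>
     (\<forall>F. F facet_of (convex hull V) \<longrightarrow> (int DIM('a) - 1) simplex F) \<and>
     (\<forall>W. W \<subseteq> V \<and> card W = DIM('a) + 2 \<longrightarrow> \<not> (\<exists>c r. W \<subseteq> sphere c r)) \<and>
     \<not> (int DIM('a)) simplex (convex hull V)"

definition outer_normal :: "'b::euclidean_space set \<Rightarrow> 'b set \<Rightarrow> 'b \<Rightarrow> real \<Rightarrow> bool" where
  "outer_normal Q F n c \<longleftrightarrow> n \<noteq> 0 \<and> Q \<subseteq> {y. inner n y \<le> c} \<and> F \<subseteq> {y. inner n y = c}"

definition lower_facet :: "('a::euclidean_space \<times> real) set \<Rightarrow> ('a \<times> real) set \<Rightarrow> bool" where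
  "lower_facet Q F \<longleftrightarrow> F facet_of Q \<and> (\<exists>n c. outer_normal Q F n c \<and> snd n < 0)"

definition upper_facet :: "('a::euclidean_space \<times> real) set \<Rightarrow> ('a \<times> real) set \<Rightarrow> bool" where
  "upper_facet Q F \<longleftrightarrow> F facet_of Q \<and> (\<exists>n c. outer_normal Q F n c \<and> snd n > 0)"

definition visible :: "'b::euclidean_space set \<Rightarrow> 'b set \<Rightarrow> 'b \<Rightarrow> bool" where
  "visible Q F A \<longleftrightarrow> (\<exists>n c. outer_normal Q F n c \<and> inner n A > c)"

text \<open>F is the last facet of a Bruggesser-Mani shelling of the facets satisfying K
  (K = lower or upper): A sees exactly the K-facets, O is interior, the segment OA meets
  the hyperplanes of the K-facets in distinct points, and aff F is met last.\<close>
definition BM_last :: "(('a::euclidean_space \<times> real) set \<Rightarrow> bool) \<Rightarrow> ('a \<times> real) set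
    \<Rightarrow> ('a \<times> real) set \<Rightarrow> bool" where
  "BM_last K Q F \<longleftrightarrow> K F \<and>
     (\<exists>A Z p. (\<forall>G. G facet_of Q \<longrightarrow> (visible Q G A \<longleftrightarrow> K G)) \<and>
        Z \<in> interior Q \<and>
        (\<forall>G. K G \<longrightarrow> closed_segment Z A \<inter> affine hull G = {p G}) \<and>
        inj_on p {G. K G} \<and>
        (\<forall>G. K G \<and> G \<noteq> F \<longrightarrow> dist Z (p G) < dist Z (p F)))"

definition delaunay_BM_ears :: "'a::euclidean_space set \<Rightarrow> 'a set set" where
  "delaunay_BM_ears V =
     (\<lambda>F. fst ` F) ` {F. BM_last (lower_facet (lifted_polytope V)) (lifted_polytope V) F}"

definition upper_delaunay_BM_ears :: "'a::euclidean_space set \<Rightarrow> 'a set set" where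
  "upper_delaunay_BM_ears V =
     (\<lambda>F. fst ` F) ` {F. BM_last (upper_facet (lifted_polytope V)) (lifted_polytope V) F}"

end

(*
  Lift the vertices to the paraboloid. Genericity makes the lifted polytope Q full-dimensional,
  and simpliciality of P makes every facet of Q nonvertical, so each facet G is the graph of an
  affine function height G x = slope G . x + offset G over R^d, bounding Q from below (lower
  facets) or from above (upper facets). As Q is bounded it contains no line, so the slopes
  affinely span R^d and their convex hull has at least d + 1 vertices. For a vertex v exposed by
  a direction u, the facet F of slope v with extreme offset has the strictly extreme height at a
  point x far out in direction u or -u. A point A slightly beyond F above x sees exactly the
  facets of F's kind, and for a generic interior point Z the segment from Z to A meets aff F
  last, so F is a BM-ear. Distinct vertices give distinct ears, and the projection is injective
  on facets of one kind.
*)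

theory Submission
  imports Defs
begin

lemma ratio_less_ratio_iff:
  fixes a d a' d' :: real
  assumes "0 < a" "0 < d" "0 < a'" "0 < d'"
  shows "a / (a + d) < a' / (a' + d') \<longleftrightarrow> a * d' < a' * d"
proof -
  have "a / (a + d) < a' / (a' + d') \<longleftrightarrow> a * (a' + d') < a' * (a + d)"
    using assms by (simp add: divide_less_eq less_divide_eq mult.commute mult.left_commute)
  then show ?thesis by (simp add: algebra_simps)
qed

lemma ratio_eq_ratio_iff:
  fixes a d a' d' :: real
  assumes "0 < a" "0 < d" "0 < a'" "0 < d'"
  shows "a / (a + d) = a' / (a' + d') \<longleftrightarrow> a * d' = a' * d"
proof -
  have "a / (a + d) = a' / (a' + d') \<longleftrightarrow> a * (a' + d') = a' * (a + d)"
    using assms by (simp add: frac_eq_eq)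
  then show ?thesis by (simp add: algebra_simps)
qed

lemma small_positive_factor_exists:
  fixes a b :: "'i \<Rightarrow> real"
  assumes "finite S" and "\<And>i. i \<in> S \<Longrightarrow> 0 < b i"
  obtains \<epsilon> where "0 < \<epsilon>" and "\<And>i. i \<in> S \<Longrightarrow> \<epsilon> * a i < b i"
proof -
  have "eventually (\<lambda>\<epsilon>. \<epsilon> * a i < b i) (at_right 0)" if "i \<in> S" for i
  proof -
    have "((\<lambda>\<epsilon>. \<epsilon> * a i) \<longlongrightarrow> 0 * a i) (at_right 0)" by (intro tendsto_intros)
    then show ?thesis using order_tendstoD(2) assms(2)[OF that] by simp
  qed
  then have "eventually (\<lambda>\<epsilon>. \<forall>i\<in>S. \<epsilon> * a i < b i) (at_right 0)"
    by (intro eventually_ball_finite[OF \<open>finite S\<close>]) blast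
  moreover have "eventually (\<lambda>\<epsilon>. 0 < \<epsilon>) (at_right (0::real))" by (rule eventually_at_right_less)
  ultimately have "eventually (\<lambda>\<epsilon>. (\<forall>i\<in>S. \<epsilon> * a i < b i) \<and> 0 < \<epsilon>) (at_right 0)"
    by (rule eventually_conj)
  then show ?thesis using that eventually_happens'[OF trivial_limit_at_right_real] by blast
qed

lemma large_factor_exists:
  fixes a b :: "'i \<Rightarrow> real"
  assumes "finite S" and "\<And>i. i \<in> S \<Longrightarrow> 0 \<le> a i" and "\<And>i. i \<in> S \<Longrightarrow> a i = 0 \<Longrightarrow> 0 < b i"
  obtains T where "\<And>i. i \<in> S \<Longrightarrow> 0 < T * a i + b i"
proof -
  have "eventually (\<lambda>T. 0 < T * a i + b i) at_top" if "i \<in> S" for i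
  proof (cases "a i = 0")
    case False
    then have "a i > 0" using assms(2)[OF that] by simp
    show ?thesis unfolding eventually_at_top_linorder
    proof (intro exI allI impI)
      fix T assume "(\<bar>b i\<bar> + 1) / a i \<le> T"
      then have "\<bar>b i\<bar> + 1 \<le> T * a i" using \<open>a i > 0\<close> by (simp add: divide_le_eq)
      then show "0 < T * a i + b i" by linarith
    qed
  qed (use assms(3)[OF that] in simp)
  then have "eventually (\<lambda>T. \<forall>i\<in>S. 0 < T * a i + b i) at_top"
    by (intro eventually_ball_finite[OF \<open>finite S\<close>]) blast
  then show ?thesis using that eventually_happens'[OF trivial_limit_at_top_linorder] by blast
qed

lemma bounded_line_subset_imp_direction_zero:
  fixes w :: "'b::real_normed_vector"
  assumes "bounded S" and line: "\<And>s. y + s *\<^sub>R w \<in> S"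
  shows "w = 0"
proof (rule ccontr)
  assume w: "w \<noteq> 0"
  obtain B where B: "\<And>x. x \<in> S \<Longrightarrow> norm x \<le> B"
    using assms(1) bounded_iff by blast
  define s where "s = (B + norm y + 1) / norm w"
  have "norm y \<le> B" using B line[of 0] by simp
  then have "B + norm y + 1 > 0" using norm_ge_zero[of y] by linarith
  then have "norm (s *\<^sub>R w) = B + norm y + 1" using w by (simp add: s_def)
  moreover have "norm (s *\<^sub>R w) \<le> norm (y + s *\<^sub>R w) + norm y"
    by (metis add_diff_cancel_left' norm_triangle_ineq4 add.commute)
  moreover have "norm (y + s *\<^sub>R w) \<le> B" using B line by blast
  ultimately show False by linarith
qed

lemma hyperplane_subset_hyperplane_imp_multiple:
  fixes a b :: "'b::euclidean_space"
  assumes a: "a \<noteq> 0" and sub: "{y. a \<bullet> y = c} \<subseteq> {y. b \<bullet> y = d}"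
  obtains \<mu> where "b = \<mu> *\<^sub>R a" and "d = \<mu> * c"
proof
  define \<mu> where "\<mu> = b \<bullet> a / (a \<bullet> a)"
  define w where "w = b - \<mu> *\<^sub>R a"
  define y0 where "y0 = (c / (a \<bullet> a)) *\<^sub>R a"
  have aa: "a \<bullet> a \<noteq> 0" using a by simp
  have aw: "a \<bullet> w = 0" using aa by (simp add: w_def \<mu>_def inner_diff_right inner_commute)
  have y0: "a \<bullet> y0 = c" using aa by (simp add: y0_def)
  then have by0: "b \<bullet> y0 = d" using sub by auto
  have "a \<bullet> (y0 + w) = c" using y0 aw by (simp add: inner_add_right)
  then have "b \<bullet> (y0 + w) = d" using sub by auto
  then have "b \<bullet> w = 0" using by0 by (simp add: inner_add_right)
  moreover have "w \<bullet> w = b \<bullet> w - \<mu> * (a \<bullet> w)" by (simp add: w_def inner_diff_left)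
  ultimately have "w \<bullet> w = 0" using aw by simp
  then show b: "b = \<mu> *\<^sub>R a" by (simp add: w_def)
  show "d = \<mu> * c" using by0 y0 b by simp
qed

lemma closed_segment_Int_hyperplane:
  fixes Z A N :: "'b::euclidean_space"
  assumes "N \<bullet> Z < c" "c < N \<bullet> A"
  shows "closed_segment Z A \<inter> {y. N \<bullet> y = c} =
    {Z + ((c - N \<bullet> Z) / (N \<bullet> A - N \<bullet> Z)) *\<^sub>R (A - Z)}"
proof -
  define \<tau> where "\<tau> = (c - N \<bullet> Z) / (N \<bullet> A - N \<bullet> Z)"
  have pos: "N \<bullet> A - N \<bullet> Z > 0" using assms by simp
  have seg: "(1 - u) *\<^sub>R Z + u *\<^sub>R A = Z + u *\<^sub>R (A - Z)" for u
    by (simp add: algebra_simps)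
  have on: "N \<bullet> (Z + u *\<^sub>R (A - Z)) = c \<longleftrightarrow> u = \<tau>" for u
    using pos by (auto simp: \<tau>_def inner_add_right inner_diff_right field_simps)
  have "0 \<le> \<tau>" "\<tau> \<le> 1" using assms pos by (auto simp: \<tau>_def divide_simps)
  have "closed_segment Z A = {Z + u *\<^sub>R (A - Z) | u. 0 \<le> u \<and> u \<le> 1}"
    by (simp add: closed_segment_def seg)
  then show ?thesis
    unfolding \<tau>_def[symmetric]
  proof (intro equalityI subsetI)
    fix y assume "y \<in> closed_segment Z A \<inter> {y. N \<bullet> y = c}"
    then obtain u where "y = Z + u *\<^sub>R (A - Z)" "N \<bullet> (Z + u *\<^sub>R (A - Z)) = c"
      using \<open>closed_segment Z A = _\<close> by auto
    then show "y \<in> {Z + \<tau> *\<^sub>R (A - Z)}" using on by simp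
  qed (use on \<open>0 \<le> \<tau>\<close> \<open>\<tau> \<le> 1\<close> in auto)
qed

lemma open_avoids_finite_hyperplanes:
  fixes U :: "'b::euclidean_space set"
  assumes "open U" "U \<noteq> {}" "finite H" and nontrivial: "\<And>a b. (a, b) \<in> H \<Longrightarrow> a \<noteq> 0 \<or> b \<noteq> 0"
  obtains z where "z \<in> U" "\<And>a b. (a, b) \<in> H \<Longrightarrow> a \<bullet> z \<noteq> b"
proof -
  have "negligible (\<Union>(a, b)\<in>H. {z. a \<bullet> z = b})"
    using \<open>finite H\<close> nontrivial by (auto intro!: negligible_Union negligible_hyperplane)
  then have "\<not> U \<subseteq> (\<Union>(a, b)\<in>H. {z. a \<bullet> z = b})"
    using open_not_negligible[OF assms(1,2)] negligible_subset by blast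
  with that show ?thesis by blast
qed

lemma extreme_point_of_convex_hull_exposed:
  fixes L :: "'b::euclidean_space set"
  assumes "finite L" and "v extreme_point_of convex hull L"
  obtains u where "\<And>w. w \<in> L \<Longrightarrow> w \<noteq> v \<Longrightarrow> u \<bullet> w < u \<bullet> v"
proof -
  have "polyhedron (convex hull L)"
    using assms(1) by (simp add: polytope_convex_hull polytope_imp_polyhedron)
  moreover have "{v} face_of convex hull L" using assms(2) by (simp add: face_of_singleton)
  ultimately have "{v} exposed_face_of convex hull L" using exposed_face_of_polyhedron by blast
  then obtain u b where ub: "convex hull L \<subseteq> {x. u \<bullet> x \<le> b}" "{v} = convex hull L \<inter> {x. u \<bullet> x = b}"
    unfolding exposed_face_of_def by blast
  have "u \<bullet> w < u \<bullet> v" if "w \<in> L" "w \<noteq> v" for w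
  proof -
    have "w \<in> convex hull L" using that hull_subset[of L convex] by blast
    then have "u \<bullet> w \<le> b" "u \<bullet> w \<noteq> b" using ub that by auto
    moreover have "u \<bullet> v = b" using ub(2) by blast
    ultimately show ?thesis by simp
  qed
  then show ?thesis by (rule that)
qed

lemma card_extreme_points_convex_hull_ge:
  fixes L :: "'b::euclidean_space set"
  assumes "finite L"
  shows "aff_dim L + 1 \<le> int (card {v. v extreme_point_of convex hull L})"
proof -
  define X where "X = {v. v extreme_point_of convex hull L}"
  have "X \<subseteq> L" using extreme_point_of_convex_hull by (auto simp: X_def)
  then have "finite X" using assms finite_subset by blast
  have "aff_dim L = aff_dim (convex hull L)" by (simp add: aff_dim_convex_hull)
  also have "convex hull L = convex hull X" using Krein_Milman_polytope[OF assms] by (simp add: X_def)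
  also have "aff_dim (convex hull X) \<le> int (card X) - 1"
    using aff_dim_le_card[OF \<open>finite X\<close>] by (simp add: aff_dim_convex_hull)
  finally show ?thesis by (simp add: X_def)
qed

section \<open>Facet hyperplanes of full-dimensional polyhedra\<close>

definition facet_hyperplane :: "'b::euclidean_space set \<Rightarrow> 'b set \<Rightarrow> 'b \<Rightarrow> real \<Rightarrow> bool" where
  "facet_hyperplane Q G N c \<longleftrightarrow> N \<noteq> 0 \<and> Q \<subseteq> {y. N \<bullet> y \<le> c} \<and> G = Q \<inter> {y. N \<bullet> y = c}
     \<and> affine hull G = {y. N \<bullet> y = c}"

lemma facet_hyperplane_exists:
  fixes Q :: "'b::euclidean_space set"
  assumes "polyhedron Q" "interior Q \<noteq> {}" "G facet_of Q"
  obtains N c where "facet_hyperplane Q G N c"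
proof -
  obtain N c where N: "N \<noteq> 0" "Q \<subseteq> {y. N \<bullet> y \<le> c}" "G = Q \<inter> {y. N \<bullet> y = c}"
    using facet_of_polyhedron[OF assms(1,3)] by blast
  have "aff_dim G = DIM('b) - 1"
    using assms(2,3) aff_dim_nonempty_interior by (simp add: facet_of_def)
  also have "\<dots> = aff_dim {y. N \<bullet> y = c}" using N by simp
  finally have "affine hull G = affine hull {y. N \<bullet> y = c}"
    using aff_dim_eq_full_gen[of G "{y. N \<bullet> y = c}"] N(3) by blast
  also have "\<dots> = {y. N \<bullet> y = c}" by (simp add: affine_hyperplane hull_same)
  finally show ?thesis using N that unfolding facet_hyperplane_def by blast
qed

lemma facet_hyperplane_interior_less:
  assumes "facet_hyperplane Q G N c" "z \<in> interior Q"
  shows "N \<bullet> z < c"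
proof -
  have "interior Q \<subseteq> interior {y. N \<bullet> y \<le> c}"
    using assms(1) by (intro interior_mono) (auto simp: facet_hyperplane_def)
  then show ?thesis using assms by (auto simp: facet_hyperplane_def)
qed

lemma facet_hyperplane_imp_outer_normal:
  "facet_hyperplane Q G N c \<Longrightarrow> outer_normal Q G N c"
  by (auto simp: facet_hyperplane_def outer_normal_def)

lemma facet_hyperplane_scaleR:
  "facet_hyperplane Q G N c \<Longrightarrow> \<mu> > 0 \<Longrightarrow> facet_hyperplane Q G (\<mu> *\<^sub>R N) (\<mu> * c)"
  by (auto simp: facet_hyperplane_def)

lemma outer_normal_positive_multiple:
  assumes fh: "facet_hyperplane Q G N c" and z: "z \<in> interior Q" and on: "outer_normal Q G n d"
  obtains \<mu> where "\<mu> > 0" "n = \<mu> *\<^sub>R N" "d = \<mu> * c"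
proof -
  have N: "N \<noteq> 0" and ah: "affine hull G = {y. N \<bullet> y = c}"
    using fh by (auto simp: facet_hyperplane_def)
  have "G \<subseteq> {y. n \<bullet> y = d}" using on by (auto simp: outer_normal_def)
  then have "affine hull G \<subseteq> {y. n \<bullet> y = d}" by (simp add: affine_hyperplane hull_minimal)
  then obtain \<mu> where nN: "n = \<mu> *\<^sub>R N" "d = \<mu> * c"
    using hyperplane_subset_hyperplane_imp_multiple[OF N] ah by metis
  have "z \<in> Q" using z interior_subset by blast
  then have "n \<bullet> z \<le> d" using on by (auto simp: outer_normal_def)
  then have "\<mu> * (N \<bullet> z - c) \<le> 0" using nN by (simp add: algebra_simps)
  moreover have "N \<bullet> z - c < 0" using facet_hyperplane_interior_less[OF fh z] by simp
  moreover have "\<mu> \<noteq> 0" using on nN by (auto simp: outer_normal_def)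
  ultimately have "\<mu> > 0" by (simp add: mult_le_0_iff)
  with nN that show ?thesis by blast
qed

lemma visible_iff_facet_hyperplane:
  assumes fh: "facet_hyperplane Q G N c" and z: "z \<in> interior Q"
  shows "visible Q G A \<longleftrightarrow> c < N \<bullet> A"
proof
  assume "visible Q G A"
  then obtain n d where on: "outer_normal Q G n d" "d < n \<bullet> A" by (auto simp: visible_def)
  then obtain \<mu> where "\<mu> > 0" "n = \<mu> *\<^sub>R N" "d = \<mu> * c"
    using outer_normal_positive_multiple[OF fh z] by blast
  then show "c < N \<bullet> A" using on(2) by simp
next
  assume "c < N \<bullet> A"
  then show "visible Q G A"
    using facet_hyperplane_imp_outer_normal[OF fh] unfolding visible_def by blast
qed

lemma polyhedron_eq_facet_halfspaces:
  fixes Q :: "'b::euclidean_space set"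
  assumes "polyhedron Q" and z: "z \<in> interior Q"
    and fh: "\<And>G. G facet_of Q \<Longrightarrow> facet_hyperplane Q G (N G) (c G)"
  shows "Q = {y. \<forall>G. G facet_of Q \<longrightarrow> N G \<bullet> y \<le> c G}"
proof
  show "Q \<subseteq> {y. \<forall>G. G facet_of Q \<longrightarrow> N G \<bullet> y \<le> c G}"
    using fh by (auto simp: facet_hyperplane_def)
next
  obtain H where "finite H" and seq: "Q = affine hull Q \<inter> \<Inter>H"
    and faces: "\<And>h. h \<in> H \<Longrightarrow> \<exists>a b. a \<noteq> 0 \<and> h = {x. a \<bullet> x \<le> b}"
    and min: "\<And>H'. H' \<subset> H \<Longrightarrow> Q \<subset> (affine hull Q) \<inter> \<Inter>H'"
    using assms by (simp add: polyhedron_Int_affine_minimal) meson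
  then obtain a b where ab: "\<And>h. h \<in> H \<Longrightarrow> a h \<noteq> 0 \<and> h = {x. a h \<bullet> x \<le> b h}"
    by metis
  have "affine hull Q = UNIV"
    using aff_dim_nonempty_interior[of Q] z aff_dim_eq_full by blast
  moreover have "y \<in> h" if y: "\<forall>G. G facet_of Q \<longrightarrow> N G \<bullet> y \<le> c G" and h: "h \<in> H" for y h
  proof -
    define G where "G = Q \<inter> {x. a h \<bullet> x = b h}"
    have G: "G facet_of Q"
      using facet_of_polyhedron_explicit[OF \<open>finite H\<close> seq ab min] h G_def by blast
    have "outer_normal Q G (a h) (b h)"
      using ab[OF h] seq h unfolding outer_normal_def G_def by blast
    then obtain \<mu> where "\<mu> > 0" "a h = \<mu> *\<^sub>R N G" "b h = \<mu> * c G"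
      using outer_normal_positive_multiple[OF fh[OF G] z] by blast
    with y G have "a h \<bullet> y \<le> b h" by (simp add: mult_left_mono)
    then show ?thesis using ab[OF h] by auto
  qed
  ultimately show "{y. \<forall>G. G facet_of Q \<longrightarrow> N G \<bullet> y \<le> c G} \<subseteq> Q"
    using seq by blast
qed

lemma facet_hyperplanes_not_proportional:
  assumes "facet_hyperplane Q G N c" "facet_hyperplane Q G' N' c'" "G \<noteq> G'"
    and "0 < d" "0 < d'"
  shows "d' *\<^sub>R N - d *\<^sub>R N' \<noteq> 0 \<or> d' * c - d * c' \<noteq> 0"
proof (rule ccontr)
  assume "\<not> ?thesis"
  then have e: "d' *\<^sub>R N = d *\<^sub>R N'" "d' * c = d * c'" by auto
  have "N \<bullet> y = c \<longleftrightarrow> N' \<bullet> y = c'" for y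
  proof -
    have "d' * (N \<bullet> y) = d * (N' \<bullet> y)"
      using arg_cong[OF e(1), of "\<lambda>v. v \<bullet> y"] by simp
    then have "N \<bullet> y = c \<longleftrightarrow> d * (N' \<bullet> y) = d' * c"
      using \<open>0 < d'\<close> by (metis mult_cancel_left order_less_irrefl)
    also have "\<dots> \<longleftrightarrow> N' \<bullet> y = c'" using e(2) \<open>0 < d\<close> by simp
    finally show ?thesis .
  qed
  then have "G = G'" using assms(1,2) by (simp add: facet_hyperplane_def)
  with \<open>G \<noteq> G'\<close> show False by blast
qed

lemma facet_hyperplane_segment_crossing:
  assumes fh: "facet_hyperplane Q G N c" and Z: "Z \<in> interior Q" and "c < N \<bullet> A"
  shows "closed_segment Z A \<inter> affine hull G = {Z + ((c - N \<bullet> Z) / (N \<bullet> A - N \<bullet> Z)) *\<^sub>R (A - Z)}"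
proof -
  have "affine hull G = {y. N \<bullet> y = c}" using fh unfolding facet_hyperplane_def by (elim conjE)
  moreover have "N \<bullet> Z < c" by (rule facet_hyperplane_interior_less[OF fh Z])
  ultimately show ?thesis using closed_segment_Int_hyperplane \<open>c < N \<bullet> A\<close> by simp
qed

section \<open>Last facets of Bruggesser--Mani shellings\<close>

text \<open>The segment from Z to A crosses the hyperplane of a K-facet G at the parameter
  \<open>\<alpha> G / (\<alpha> G + \<delta> G)\<close>, where \<open>\<alpha> G = c G - N G \<bullet> Z\<close> and \<open>\<delta> G = N G \<bullet> A - c G\<close>;
  the hypotheses compare these parameters with denominators cleared.\<close>

lemma BM_last_if_generic_crossing_order:
  fixes Q :: "('a::euclidean_space \<times> real) set"
  assumes fh: "\<And>G. G facet_of Q \<Longrightarrow> facet_hyperplane Q G (N G) (c G)"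
    and KF: "\<And>G. K G \<Longrightarrow> G facet_of Q" and "K F"
    and vis: "\<And>G. G facet_of Q \<Longrightarrow> c G < N G \<bullet> A \<longleftrightarrow> K G"
    and Z: "Z \<in> interior Q"
    and last: "\<And>G. K G \<Longrightarrow> G \<noteq> F \<Longrightarrow>
      (c G - N G \<bullet> Z) * (N F \<bullet> A - c F) < (c F - N F \<bullet> Z) * (N G \<bullet> A - c G)"
    and distinct: "\<And>G G'. K G \<Longrightarrow> K G' \<Longrightarrow> G \<noteq> G' \<Longrightarrow>
      (c G - N G \<bullet> Z) * (N G' \<bullet> A - c G') \<noteq> (c G' - N G' \<bullet> Z) * (N G \<bullet> A - c G)"
  shows "BM_last K Q F"
proof -
  define \<alpha> where "\<alpha> G = c G - N G \<bullet> Z" for G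
  define \<delta> where "\<delta> G = N G \<bullet> A - c G" for G
  define \<tau> where "\<tau> G = \<alpha> G / (\<alpha> G + \<delta> G)" for G
  define p where "p G = Z + \<tau> G *\<^sub>R (A - Z)" for G
  have \<alpha>: "\<alpha> G > 0" and \<delta>: "\<delta> G > 0" if "K G" for G
    using facet_hyperplane_interior_less[OF fh[OF KF[OF that]] Z] vis[OF KF[OF that]] that
    by (auto simp: \<alpha>_def \<delta>_def)
  have "A \<noteq> Z" using \<alpha>[OF \<open>K F\<close>] \<delta>[OF \<open>K F\<close>] by (auto simp: \<alpha>_def \<delta>_def)
  have crossing: "closed_segment Z A \<inter> affine hull G = {p G}" if "K G" for G
    using facet_hyperplane_segment_crossing[OF fh[OF KF[OF that]] Z] vis[OF KF[OF that]] that
    by (simp add: p_def \<tau>_def \<alpha>_def \<delta>_def)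
  have dist_p: "dist Z (p G) = \<tau> G * norm (A - Z)" if "K G" for G
  proof -
    have "\<tau> G \<ge> 0" using \<alpha>[OF that] \<delta>[OF that] by (simp add: \<tau>_def)
    then show ?thesis by (simp add: p_def dist_norm)
  qed
  have "inj_on p {G. K G}"
  proof (rule inj_onI)
    fix G G' assume G: "G \<in> {G. K G}" and G': "G' \<in> {G. K G}" and "p G = p G'"
    then have "\<tau> G = \<tau> G'" using \<open>A \<noteq> Z\<close> by (simp add: p_def)
    then have "\<alpha> G * \<delta> G' = \<alpha> G' * \<delta> G"
      using G G' \<alpha> \<delta> ratio_eq_ratio_iff by (simp add: \<tau>_def)
    then show "G = G'" using G G' distinct unfolding \<alpha>_def \<delta>_def by blast
  qed
  moreover have "dist Z (p G) < dist Z (p F)" if "K G" "G \<noteq> F" for G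
  proof -
    have "\<alpha> G * \<delta> F < \<alpha> F * \<delta> G" using last[OF that] by (simp add: \<alpha>_def \<delta>_def)
    then have "\<tau> G < \<tau> F"
      using that \<open>K F\<close> \<alpha> \<delta> ratio_less_ratio_iff by (simp add: \<tau>_def)
    then show ?thesis using dist_p that \<open>K F\<close> \<open>A \<noteq> Z\<close> by simp
  qed
  moreover have "visible Q G A \<longleftrightarrow> K G" if "G facet_of Q" for G
    using visible_iff_facet_hyperplane[OF fh[OF that] Z] vis[OF that] by simp
  ultimately show ?thesis
    unfolding BM_last_def using \<open>K F\<close> Z crossing by blast
qed

text \<open>The strict order at Z0 persists on an open neighbourhood, while a tie between two
  K-facets confines Z to one of finitely many hyperplanes, which cannot cover an open set.\<close>

lemma crossing_order_generic_point:
  fixes Q :: "'b::euclidean_space set"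
  assumes fh: "\<And>G. G facet_of Q \<Longrightarrow> facet_hyperplane Q G (N G) (c G)"
    and KF: "\<And>G. K G \<Longrightarrow> G facet_of Q" and finK: "finite {G. K G}"
    and beyond: "\<And>G. K G \<Longrightarrow> c G < N G \<bullet> A"
    and Z0: "Z0 \<in> interior Q"
    and last0: "\<And>G. K G \<Longrightarrow> G \<noteq> F \<Longrightarrow>
      (c G - N G \<bullet> Z0) * (N F \<bullet> A - c F) < (c F - N F \<bullet> Z0) * (N G \<bullet> A - c G)"
  shows "\<exists>Z\<in>interior Q.
    (\<forall>G. K G \<longrightarrow> G \<noteq> F \<longrightarrow>
      (c G - N G \<bullet> Z) * (N F \<bullet> A - c F) < (c F - N F \<bullet> Z) * (N G \<bullet> A - c G)) \<and>
    (\<forall>G G'. K G \<longrightarrow> K G' \<longrightarrow> G \<noteq> G' \<longrightarrow>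
      (c G - N G \<bullet> Z) * (N G' \<bullet> A - c G') \<noteq> (c G' - N G' \<bullet> Z) * (N G \<bullet> A - c G))"
proof -
  define \<delta> where "\<delta> G = N G \<bullet> A - c G" for G
  define U where "U = interior Q \<inter>
    (\<Inter>G\<in>{G. K G \<and> G \<noteq> F}. {Z. (c G - N G \<bullet> Z) * \<delta> F < (c F - N F \<bullet> Z) * \<delta> G})"
  define H where "H = (\<lambda>(G, G'). (\<delta> G' *\<^sub>R N G - \<delta> G *\<^sub>R N G', \<delta> G' * c G - \<delta> G * c G'))
    ` {(G, G'). K G \<and> K G' \<and> G \<noteq> G'}"
  have "open {Z. (c G - N G \<bullet> Z) * \<delta> F < (c F - N F \<bullet> Z) * \<delta> G}" for G
    by (intro open_Collect_less continuous_intros)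
  then have "open U"
    unfolding U_def using finK by (intro open_Int open_INT) auto
  moreover have "Z0 \<in> U" using Z0 last0 by (simp add: U_def \<delta>_def)
  moreover have "finite H"
    unfolding H_def
    by (intro finite_imageI finite_subset[OF _ finite_cartesian_product[OF finK finK]]) auto
  moreover have "a \<noteq> 0 \<or> b \<noteq> 0" if ab_H: "(a, b) \<in> H" for a b
  proof -
    obtain G G' where GG': "K G" "K G'" "G \<noteq> G'"
      and ab: "a = \<delta> G' *\<^sub>R N G - \<delta> G *\<^sub>R N G'" "b = \<delta> G' * c G - \<delta> G * c G'"
      using ab_H unfolding H_def by auto
    have "\<delta> G > 0" "\<delta> G' > 0" using beyond GG' by (auto simp: \<delta>_def)
    from facet_hyperplanes_not_proportional[OF fh[OF KF[OF GG'(1)]] fh[OF KF[OF GG'(2)]] GG'(3) this]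
    show ?thesis unfolding ab .
  qed
  ultimately obtain Z where Z: "Z \<in> U" and avoid: "\<And>a b. (a, b) \<in> H \<Longrightarrow> a \<bullet> Z \<noteq> b"
    using open_avoids_finite_hyperplanes by blast
  have "(c G - N G \<bullet> Z) * \<delta> G' \<noteq> (c G' - N G' \<bullet> Z) * \<delta> G"
    if "K G" "K G'" "G \<noteq> G'" for G G'
  proof -
    have "(\<delta> G' *\<^sub>R N G - \<delta> G *\<^sub>R N G') \<bullet> Z \<noteq> \<delta> G' * c G - \<delta> G * c G'"
      using avoid that by (force simp: H_def)
    then show ?thesis by (simp add: inner_diff_left algebra_simps)
  qed
  then have "\<forall>G G'. K G \<longrightarrow> K G' \<longrightarrow> G \<noteq> G' \<longrightarrow>
      (c G - N G \<bullet> Z) * (N G' \<bullet> A - c G') \<noteq> (c G' - N G' \<bullet> Z) * (N G \<bullet> A - c G)"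
    by (simp add: \<delta>_def)
  moreover have "\<forall>G. K G \<longrightarrow> G \<noteq> F \<longrightarrow>
      (c G - N G \<bullet> Z) * (N F \<bullet> A - c F) < (c F - N F \<bullet> Z) * (N G \<bullet> A - c G)"
    using Z by (simp add: U_def \<delta>_def)
  moreover have "Z \<in> interior Q" using Z by (simp add: U_def)
  ultimately show ?thesis by blast
qed

lemma BM_last_if_crossing_order:
  fixes Q :: "('a::euclidean_space \<times> real) set"
  assumes fh: "\<And>G. G facet_of Q \<Longrightarrow> facet_hyperplane Q G (N G) (c G)"
    and KF: "\<And>G. K G \<Longrightarrow> G facet_of Q" and "finite {G. K G}" and "K F"
    and vis: "\<And>G. G facet_of Q \<Longrightarrow> c G < N G \<bullet> A \<longleftrightarrow> K G"
    and Z0: "Z0 \<in> interior Q"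
    and last0: "\<And>G. K G \<Longrightarrow> G \<noteq> F \<Longrightarrow>
      (c G - N G \<bullet> Z0) * (N F \<bullet> A - c F) < (c F - N F \<bullet> Z0) * (N G \<bullet> A - c G)"
  shows "BM_last K Q F"
proof -
  have beyond: "c G < N G \<bullet> A" if "K G" for G using vis[OF KF[OF that]] that by simp
  from crossing_order_generic_point[OF fh KF \<open>finite {G. K G}\<close> beyond Z0 last0]
  obtain Z where Z: "Z \<in> interior Q" and order:
    "(\<forall>G. K G \<longrightarrow> G \<noteq> F \<longrightarrow>
      (c G - N G \<bullet> Z) * (N F \<bullet> A - c F) < (c F - N F \<bullet> Z) * (N G \<bullet> A - c G)) \<and>
    (\<forall>G G'. K G \<longrightarrow> K G' \<longrightarrow> G \<noteq> G' \<longrightarrow>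
      (c G - N G \<bullet> Z) * (N G' \<bullet> A - c G') \<noteq> (c G' - N G' \<bullet> Z) * (N G \<bullet> A - c G))" ..
  show ?thesis
    using BM_last_if_generic_crossing_order[OF fh KF \<open>K F\<close> vis Z
      order[THEN conjunct1, rule_format] order[THEN conjunct2, rule_format]] .
qed

section \<open>The lifted polytope\<close>

lemma inner_lift: "(a, s) \<bullet> lift v = a \<bullet> v + s * (norm v)\<^sup>2"
  by (simp add: lift_def)

lemma lift_subset_hyperplane_imp_cospherical:
  fixes S :: "'a::euclidean_space set"
  assumes "s \<noteq> 0" and "lift ` S \<subseteq> {y. (a, s) \<bullet> y = \<beta>}"
  shows "\<exists>z r. S \<subseteq> sphere z r"
proof -
  define z where "z = (- 1 / (2 * s)) *\<^sub>R a"
  define K where "K = \<beta> / s + (norm z)\<^sup>2"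
  have "dist z v = sqrt K" if "v \<in> S" for v
  proof -
    have "a \<bullet> v + s * (norm v)\<^sup>2 = \<beta>" using assms(2) that by (auto simp: inner_lift)
    moreover have "(norm (v - z))\<^sup>2 = (norm v)\<^sup>2 - 2 * (v \<bullet> z) + (norm z)\<^sup>2"
      by (simp add: power2_norm_eq_inner inner_diff_left inner_diff_right inner_commute)
    moreover have "v \<bullet> z = - (a \<bullet> v) / (2 * s)" by (simp add: z_def inner_commute)
    ultimately have "(dist z v)\<^sup>2 = K"
      using assms(1) by (simp add: K_def dist_norm norm_minus_commute field_simps)
    then show ?thesis by (metis zero_le_dist real_sqrt_unique)
  qed
  then have "S \<subseteq> sphere z (sqrt K)" by auto
  then show ?thesis by blast
qed

lemma generic_simplicial_polytope_aff_dim: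
  fixes V :: "'a::euclidean_space set"
  shows "generic_simplicial_polytope V \<Longrightarrow> aff_dim V = int DIM('a)"
  by (simp add: generic_simplicial_polytope_def aff_dim_convex_hull)

lemma generic_simplicial_polytope_card:
  fixes V :: "'a::euclidean_space set"
  assumes g: "generic_simplicial_polytope V"
  shows "DIM('a) + 2 \<le> card V"
proof -
  have fin: "finite V" and ns: "\<not> (int DIM('a)) simplex (convex hull V)"
    using g by (auto simp: generic_simplicial_polytope_def)
  have adV: "aff_dim V = int DIM('a)" using generic_simplicial_polytope_aff_dim[OF g] .
  then have le: "int DIM('a) \<le> int (card V) - 1" using aff_dim_le_card[OF fin] by simp
  have "card V \<noteq> DIM('a) + 1"
  proof
    assume c: "card V = DIM('a) + 1"
    then have "\<not> affine_dependent V" using affine_independent_iff_card[of V] fin adV by simp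
    then have "(int DIM('a)) simplex (convex hull V)"
      unfolding simplex_def using c by (intro exI[of _ V]) simp
    with ns show False by blast
  qed
  with le show ?thesis by linarith
qed

text \<open>This is where genericity enters: cospherical vertices would lift into a common
  hyperplane.\<close>

lemma aff_dim_lift_generic:
  fixes V :: "'a::euclidean_space set"
  assumes g: "generic_simplicial_polytope V"
  shows "aff_dim (lift ` V) = DIM('a \<times> real)"
proof (rule ccontr)
  assume "aff_dim (lift ` V) \<noteq> DIM('a \<times> real)"
  then have "aff_dim (lift ` V) < DIM('a \<times> real)" using aff_dim_le_DIM[of "lift ` V"] by linarith
  then obtain n \<beta> where n: "n \<noteq> 0" "lift ` V \<subseteq> {y. n \<bullet> y = \<beta>}"
    by (rule aff_lowdim_subset_hyperplane)
  obtain a s where as: "n = (a, s)" by fastforce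
  show False
  proof (cases "s = 0")
    case True
    then have "a \<noteq> 0" using n as by (auto simp: zero_prod_def)
    have "V \<subseteq> {x. a \<bullet> x = \<beta>}" using n(2) as True by (auto simp: inner_lift)
    then have "aff_dim V \<le> aff_dim {x. a \<bullet> x = \<beta>}" by (rule aff_dim_subset)
    then show False using \<open>a \<noteq> 0\<close> generic_simplicial_polytope_aff_dim[OF g] by simp
  next
    case False
    have "lift ` V \<subseteq> {y. (a, s) \<bullet> y = \<beta>}" using n(2) as by simp
    then obtain z r where "V \<subseteq> sphere z r"
      using lift_subset_hyperplane_imp_cospherical[OF False] by blast
    moreover obtain W where W: "W \<subseteq> V" "card W = DIM('a) + 2"
      using obtain_subset_with_card_n[OF generic_simplicial_polytope_card[OF g]] by metis
    moreover have "\<not> (\<exists>c r. W \<subseteq> sphere c r)"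
      using g W by (simp add: generic_simplicial_polytope_def)
    ultimately show False by blast
  qed
qed

lemma lifted_polytope_interior_nonempty:
  fixes V :: "'a::euclidean_space set"
  assumes g: "generic_simplicial_polytope V"
  shows "interior (lifted_polytope V) \<noteq> {}"
proof -
  have "V \<noteq> {}" using generic_simplicial_polytope_card[OF g] by auto
  then have "lifted_polytope V \<noteq> {}" by (simp add: lifted_polytope_def)
  moreover have "aff_dim (lifted_polytope V) = DIM('a \<times> real)"
    using aff_dim_lift_generic[OF g] by (simp add: lifted_polytope_def aff_dim_convex_hull)
  ultimately show ?thesis
    by (simp add: lifted_polytope_def interior_rel_interior_gen rel_interior_eq_empty)
qed

lemma generic_simplicial_polytope_proper_face_card:
  fixes V :: "'a::euclidean_space set"
  assumes g: "generic_simplicial_polytope V"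
    and E: "E face_of convex hull V" "E \<noteq> convex hull V"
  shows "card (V \<inter> E) \<le> DIM('a)"
proof (cases "E = {}")
  case False
  have fin: "finite V" and ext: "V = {v. v extreme_point_of (convex hull V)}"
    and simplicial: "\<forall>F. F facet_of (convex hull V) \<longrightarrow> (int DIM('a) - 1) simplex F"
    using g by (auto simp: generic_simplicial_polytope_def)
  have "polyhedron (convex hull V)"
    using fin by (simp add: polytope_convex_hull polytope_imp_polyhedron)
  then obtain F where F: "F facet_of convex hull V" "E \<subseteq> F"
    using face_of_polyhedron_subset_facet E False by blast
  then obtain C where C: "\<not> affine_dependent C" "int (card C) = int DIM('a)" "F = convex hull C"
    using simplicial unfolding simplex_def by auto
  have "V \<inter> E \<subseteq> C"
  proof
    fix v assume "v \<in> V \<inter> E"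
    then have "v extreme_point_of convex hull V" "v \<in> F" using ext F(2) by auto
    then have "v extreme_point_of F"
      using extreme_point_of_face[OF facet_of_imp_face_of[OF F(1)]] by blast
    then show "v \<in> C" using C(3) extreme_point_of_convex_hull by blast
  qed
  moreover have "finite C" using C(1) aff_independent_finite by blast
  ultimately show ?thesis using C(2) by (metis card_mono of_nat_eq_iff)
qed simp

lemma lifted_facet_card_vertices:
  fixes V :: "'a::euclidean_space set"
  assumes fin: "finite V" and int: "interior (lifted_polytope V) \<noteq> {}"
    and G: "G facet_of lifted_polytope V"
  shows "DIM('a) + 1 \<le> card {v \<in> V. lift v \<in> G}"
proof -
  have "G face_of convex hull (lift ` V)"
    using G by (simp add: facet_of_def lifted_polytope_def)
  then obtain S where S: "S \<subseteq> lift ` V" "G = convex hull S"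
    using face_of_convex_hull_subset[OF finite_imp_compact[OF finite_imageI[OF fin]]] by blast
  have finS: "finite S" using S(1) fin finite_subset by blast
  have "aff_dim S = aff_dim G" using S by (simp add: aff_dim_convex_hull)
  also have "\<dots> = int DIM('a)"
    using G aff_dim_nonempty_interior[OF int] by (simp add: facet_of_def)
  finally have "DIM('a) + 1 \<le> card S" using aff_dim_le_card[OF finS] by simp
  also have "S \<subseteq> lift ` {v \<in> V. lift v \<in> G}"
  proof
    fix y assume "y \<in> S"
    then have "y \<in> G" using S(2) hull_subset[of S convex] by blast
    moreover obtain v where "v \<in> V" "y = lift v" using S(1) \<open>y \<in> S\<close> by blast
    ultimately show "y \<in> lift ` {v \<in> V. lift v \<in> G}" by blast
  qed
  then have "card S \<le> card (lift ` {v \<in> V. lift v \<in> G})" using fin by (simp add: card_mono)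
  also have "\<dots> \<le> card {v \<in> V. lift v \<in> G}" by (rule card_image_le) (use fin in simp)
  finally show ?thesis .
qed

text \<open>The vertices on a vertical facet would be at least d + 1 vertices of a proper face
  of P, but the facets of P are simplices.\<close>

lemma lifted_facet_hyperplane_nonvertical:
  fixes V :: "'a::euclidean_space set"
  assumes g: "generic_simplicial_polytope V" and G: "G facet_of lifted_polytope V"
    and fh: "facet_hyperplane (lifted_polytope V) G N c"
  shows "snd N \<noteq> 0"
proof
  assume "snd N = 0"
  then obtain a where N: "N = (a, 0)" by (metis prod.collapse)
  have fin: "finite V" using g by (simp add: generic_simplicial_polytope_def)
  have "a \<noteq> 0" using fh N by (auto simp: facet_hyperplane_def zero_prod_def)
  have lift_in: "lift v \<in> lifted_polytope V" if "v \<in> V" for v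
    using that hull_subset[of "lift ` V" convex] by (auto simp: lifted_polytope_def)
  have V_le: "V \<subseteq> {x. a \<bullet> x \<le> c}"
  proof
    fix v assume "v \<in> V"
    then have "N \<bullet> lift v \<le> c" using lift_in fh by (auto simp: facet_hyperplane_def)
    then show "v \<in> {x. a \<bullet> x \<le> c}" using N by (simp add: inner_lift)
  qed
  let ?P = "convex hull V"
  define E where "E = ?P \<inter> {x. a \<bullet> x = c}"
  have "?P \<subseteq> {x. a \<bullet> x \<le> c}" using V_le by (simp add: convex_halfspace_le hull_minimal)
  then have "E face_of ?P" unfolding E_def by (intro face_of_Int_supporting_hyperplane_le) auto
  moreover have "E \<noteq> ?P"
  proof
    assume "E = ?P"
    then have "?P \<subseteq> {x. a \<bullet> x = c}" unfolding E_def by blast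
    then have "aff_dim ?P \<le> aff_dim {x. a \<bullet> x = c}" by (rule aff_dim_subset)
    then show False
      using \<open>a \<noteq> 0\<close> generic_simplicial_polytope_aff_dim[OF g] by (simp add: aff_dim_convex_hull)
  qed
  ultimately have "card (V \<inter> E) \<le> DIM('a)" by (rule generic_simplicial_polytope_proper_face_card[OF g])
  moreover have "{v \<in> V. lift v \<in> G} \<subseteq> V \<inter> E"
    using fh N hull_subset[of V convex] by (auto simp: facet_hyperplane_def inner_lift E_def)
  then have "card {v \<in> V. lift v \<in> G} \<le> card (V \<inter> E)" using fin by (simp add: card_mono)
  moreover have "DIM('a) + 1 \<le> card {v \<in> V. lift v \<in> G}"
    using lifted_facet_card_vertices[OF fin lifted_polytope_interior_nonempty[OF g] G] .
  ultimately show False by linarith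
qed

lemma lifted_facet_hyperplane_normalized:
  fixes V :: "'a::euclidean_space set"
  assumes g: "generic_simplicial_polytope V" and G: "G facet_of lifted_polytope V"
  obtains N c where "facet_hyperplane (lifted_polytope V) G N c" "snd N = 1 \<or> snd N = -1"
proof -
  have "polyhedron (lifted_polytope V)"
    using g by (simp add: generic_simplicial_polytope_def lifted_polytope_def
        polytope_convex_hull polytope_imp_polyhedron)
  then obtain N c where fh: "facet_hyperplane (lifted_polytope V) G N c"
    using facet_hyperplane_exists lifted_polytope_interior_nonempty[OF g] G by blast
  then have "snd N \<noteq> 0" by (rule lifted_facet_hyperplane_nonvertical[OF g G])
  then have "snd ((1 / \<bar>snd N\<bar>) *\<^sub>R N) = 1 \<or> snd ((1 / \<bar>snd N\<bar>) *\<^sub>R N) = -1"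
    by (cases "snd N > 0") auto
  moreover have "1 / \<bar>snd N\<bar> > 0" using \<open>snd N \<noteq> 0\<close> by simp
  ultimately show ?thesis using facet_hyperplane_scaleR[OF fh] that by blast
qed

section \<open>Facets of the lifted polytope as graphs\<close>

text \<open>Each facet G of the lifted polytope gets a normal \<open>N G\<close> whose last coordinate
  \<open>orient G\<close> is \<open>-1\<close> (lower facet) or \<open>1\<close> (upper facet); then aff G is the graph of
  the affine function \<open>height G\<close>.\<close>

locale lifted_facets =
  fixes V :: "'a::euclidean_space set"
    and N :: "('a \<times> real) set \<Rightarrow> 'a \<times> real" and c :: "('a \<times> real) set \<Rightarrow> real"
  assumes finite_V: "finite V"
    and interior_nonempty: "interior (lifted_polytope V) \<noteq> {}"
    and facet_hyperplane:
      "\<And>G. G facet_of lifted_polytope V \<Longrightarrow> facet_hyperplane (lifted_polytope V) G (N G) (c G)"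
    and normalized: "\<And>G. G facet_of lifted_polytope V \<Longrightarrow> snd (N G) = 1 \<or> snd (N G) = -1"
begin

abbreviation Q where "Q \<equiv> lifted_polytope V"

definition orient :: "('a \<times> real) set \<Rightarrow> real" where
  "orient G = snd (N G)"

definition slope :: "('a \<times> real) set \<Rightarrow> 'a" where
  "slope G = (- orient G) *\<^sub>R fst (N G)"

definition offset :: "('a \<times> real) set \<Rightarrow> real" where
  "offset G = orient G * c G"

definition height :: "('a \<times> real) set \<Rightarrow> 'a \<Rightarrow> real" where
  "height G x = slope G \<bullet> x + offset G"

lemma orient_cases: "G facet_of Q \<Longrightarrow> orient G = 1 \<or> orient G = -1"
  using normalized by (simp add: orient_def)

lemma orient_mult_self: "G facet_of Q \<Longrightarrow> orient G * orient G = 1"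
  using orient_cases by fastforce

lemma polyhedron_Q: "polyhedron Q"
  using finite_V by (simp add: lifted_polytope_def polytope_convex_hull polytope_imp_polyhedron)

lemma finite_facets: "finite {G. G facet_of Q}"
  using polyhedron_Q by (rule finite_polyhedron_facets)

lemma inner_facet_normal:
  assumes "G facet_of Q"
  shows "N G \<bullet> (x, t) - c G = orient G * (t - height G x)"
proof -
  have "N G \<bullet> (x, t) = fst (N G) \<bullet> x + orient G * t" by (cases "N G") (simp add: orient_def)
  moreover have "orient G * orient G = 1" using orient_mult_self[OF assms] .
  ultimately show ?thesis
    by (simp add: height_def slope_def offset_def algebra_simps)
qed

lemma mem_lifted_polytope_iff:
  "(x, t) \<in> Q \<longleftrightarrow> (\<forall>G. G facet_of Q \<longrightarrow> orient G * (t - height G x) \<le> 0)"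
proof -
  obtain z where "z \<in> interior Q" using interior_nonempty by blast
  then have "Q = {y. \<forall>G. G facet_of Q \<longrightarrow> N G \<bullet> y \<le> c G}"
    using polyhedron_eq_facet_halfspaces[OF polyhedron_Q _ facet_hyperplane] by blast
  from arg_cong[where f = "\<lambda>S. (x, t) \<in> S", OF this]
  have "(x, t) \<in> Q \<longleftrightarrow> (\<forall>G. G facet_of Q \<longrightarrow> N G \<bullet> (x, t) \<le> c G)" by simp
  moreover have "N G \<bullet> (x, t) \<le> c G \<longleftrightarrow> orient G * (t - height G x) \<le> 0" if "G facet_of Q" for G
    using inner_facet_normal[OF that, of x t] by linarith
  ultimately show ?thesis by auto
qed

lemma mem_facet_iff:
  assumes "G facet_of Q"
  shows "(x, t) \<in> G \<longleftrightarrow> (x, t) \<in> Q \<and> t = height G x"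
proof -
  have "G = Q \<inter> {y. N G \<bullet> y = c G}"
    using facet_hyperplane[OF assms] by (simp add: facet_hyperplane_def)
  moreover have "N G \<bullet> (x, t) = c G \<longleftrightarrow> t = height G x"
    using inner_facet_normal[OF assms, of x t] orient_cases[OF assms] by auto
  ultimately show ?thesis by blast
qed

lemma facet_eqI:
  assumes "G facet_of Q" "F facet_of Q" "slope G = slope F" "offset G = offset F"
  shows "G = F"
proof (rule set_eqI)
  fix y :: "'a \<times> real"
  obtain x t where y: "y = (x, t)" by fastforce
  have "height G x = height F x" using assms by (simp add: height_def)
  then show "y \<in> G \<longleftrightarrow> y \<in> F" using mem_facet_iff[OF assms(1)] mem_facet_iff[OF assms(2)] y by simp
qed

lemma outer_normal_orient:
  assumes G: "G facet_of Q" and "outer_normal Q G n d"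
  shows "0 < snd n * orient G"
proof -
  obtain z where "z \<in> interior Q" using interior_nonempty by blast
  then obtain \<mu> where "\<mu> > 0" "n = \<mu> *\<^sub>R N G"
    using outer_normal_positive_multiple[OF facet_hyperplane[OF G]] assms(2) by metis
  then show ?thesis using orient_mult_self[OF G] by (simp add: orient_def mult.assoc)
qed

lemma lower_facet_iff: "lower_facet Q G \<longleftrightarrow> G facet_of Q \<and> orient G = -1"
proof
  assume "lower_facet Q G"
  then obtain n d where G: "G facet_of Q" and n: "outer_normal Q G n d" "snd n < 0"
    by (auto simp: lower_facet_def)
  then have "orient G < 0" using outer_normal_orient[OF G n(1)] by (simp add: zero_less_mult_iff)
  then show "G facet_of Q \<and> orient G = -1" using G orient_cases[OF G] by auto
next
  assume G: "G facet_of Q \<and> orient G = -1"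
  then have "outer_normal Q G (N G) (c G)" by (simp add: facet_hyperplane facet_hyperplane_imp_outer_normal)
  with G show "lower_facet Q G"
    unfolding lower_facet_def by (intro conjI exI[of _ "N G"] exI[of _ "c G"]) (auto simp: orient_def)
qed

lemma upper_facet_iff: "upper_facet Q G \<longleftrightarrow> G facet_of Q \<and> orient G = 1"
proof
  assume "upper_facet Q G"
  then obtain n d where G: "G facet_of Q" and n: "outer_normal Q G n d" "snd n > 0"
    by (auto simp: upper_facet_def)
  then have "orient G > 0" using outer_normal_orient[OF G n(1)] by (simp add: zero_less_mult_iff)
  then show "G facet_of Q \<and> orient G = 1" using G orient_cases[OF G] by auto
next
  assume G: "G facet_of Q \<and> orient G = 1"
  then have "outer_normal Q G (N G) (c G)" by (simp add: facet_hyperplane facet_hyperplane_imp_outer_normal)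
  with G show "upper_facet Q G"
    unfolding upper_facet_def by (intro conjI exI[of _ "N G"] exI[of _ "c G"]) (auto simp: orient_def)
qed

lemma aff_dim_slopes: "aff_dim (slope ` {G. G facet_of Q}) = int DIM('a)"
proof (rule ccontr)
  assume "aff_dim (slope ` {G. G facet_of Q}) \<noteq> int DIM('a)"
  then have "aff_dim (slope ` {G. G facet_of Q}) < DIM('a)"
    using aff_dim_le_DIM[of "slope ` {G. G facet_of Q}"] by linarith
  then obtain w k where "w \<noteq> 0" and wk: "slope ` {G. G facet_of Q} \<subseteq> {x. w \<bullet> x = k}"
    by (rule aff_lowdim_subset_hyperplane)
  obtain x t where xt: "(x, t) \<in> Q" using interior_nonempty interior_subset by fastforce
  have "(x, t) + s *\<^sub>R (w, k) \<in> Q" for s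
  proof -
    have "height G (x + s *\<^sub>R w) = height G x + s * k" if "G facet_of Q" for G
      using wk that by (auto simp: height_def inner_add_right inner_commute)
    then show ?thesis using xt by (simp add: mem_lifted_polytope_iff)
  qed
  moreover have "bounded Q"
    using finite_V by (simp add: lifted_polytope_def polytope_convex_hull polytope_imp_bounded)
  ultimately have "(w, k) = 0" by (rule bounded_line_subset_imp_direction_zero[rotated])
  with \<open>w \<noteq> 0\<close> show False by (simp add: zero_prod_def)
qed

lemma fst_image_facet_subset:
  assumes F: "F facet_of Q" and G: "G facet_of Q" and "orient G = orient F"
    and "fst ` F = fst ` G"
  shows "G \<subseteq> F"
proof
  fix y assume "y \<in> G"
  obtain x t where y: "y = (x, t)" by fastforce
  then have t: "t = height G x" and "(x, t) \<in> Q" using mem_facet_iff[OF G] \<open>y \<in> G\<close> by auto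
  have "x \<in> fst ` F" using assms(4) \<open>y \<in> G\<close> y by force
  then obtain t' where "(x, t') \<in> F" by force
  then have t': "t' = height F x" and "(x, t') \<in> Q" using mem_facet_iff[OF F] by auto
  have "orient F * (t - height F x) \<le> 0" using \<open>(x, t) \<in> Q\<close> F by (simp add: mem_lifted_polytope_iff)
  moreover have "orient G * (t' - height G x) \<le> 0" using \<open>(x, t') \<in> Q\<close> G by (simp add: mem_lifted_polytope_iff)
  ultimately have "height G x = height F x"
    using orient_cases[OF F] \<open>orient G = orient F\<close> t t' by auto
  then show "y \<in> F" using mem_facet_iff[OF F] \<open>(x, t) \<in> Q\<close> t y by simp
qed

lemma inj_on_fst_image: "inj_on (\<lambda>F. fst ` F) {F. F facet_of Q \<and> orient F = \<sigma>}"
proof (rule inj_onI)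
  fix F G assume "F \<in> {F. F facet_of Q \<and> orient F = \<sigma>}" "G \<in> {F. F facet_of Q \<and> orient F = \<sigma>}"
    and "fst ` F = fst ` G"
  then show "F = G"
    using fst_image_facet_subset[of F G] fst_image_facet_subset[of G F] by auto
qed

lemma inner_normal_above_facet:
  assumes F: "F facet_of Q" and G: "G facet_of Q"
  shows "N G \<bullet> (x, height F x + orient F * \<epsilon>) - c G
    = orient G * orient F * (orient F * (height F x - height G x) + \<epsilon>)"
proof -
  have \<sigma>\<sigma>: "orient F * (orient F * y) = y" for y
    using orient_mult_self[OF F] by (metis mult.assoc mult_1_left)
  have "height F x + orient F * \<epsilon> - height G x
      = orient F * (orient F * (height F x - height G x) + \<epsilon>)"
    by (simp add: distrib_left \<sigma>\<sigma>)
  then show ?thesis using inner_facet_normal[OF G] by simp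
qed

text \<open>A lies just beyond aff F above x, on the side seen exactly by the facets of F's kind;
  as \<open>\<epsilon>\<close> shrinks, the crossing with aff F tends to A while the other crossings stay away
  from it.\<close>

lemma BM_last_if_height_extreme:
  assumes F: "F facet_of Q"
    and x: "\<And>G. G facet_of Q \<Longrightarrow> G \<noteq> F \<Longrightarrow> orient F * height G x < orient F * height F x"
  shows "BM_last (\<lambda>G. G facet_of Q \<and> orient G = orient F) Q F"
proof -
  define \<sigma> where "\<sigma> = orient F"
  obtain Z0 where Z0: "Z0 \<in> interior Q" using interior_nonempty by blast
  define \<alpha> where "\<alpha> G = c G - N G \<bullet> Z0" for G
  define g where "g G = \<sigma> * (height F x - height G x)" for G
  have \<alpha>: "\<alpha> G > 0" if "G facet_of Q" for G
    using facet_hyperplane_interior_less[OF facet_hyperplane[OF that] Z0] by (simp add: \<alpha>_def)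
  have g: "g G > 0" if "G facet_of Q" "G \<noteq> F" for G
    using x[OF that] by (simp add: g_def \<sigma>_def algebra_simps)
  obtain \<epsilon> where "\<epsilon> > 0" and \<epsilon>: "\<And>G. G \<in> {G. G facet_of Q \<and> G \<noteq> F} \<Longrightarrow> \<epsilon> * \<alpha> G < \<alpha> F * g G"
    using small_positive_factor_exists[of "{G. G facet_of Q \<and> G \<noteq> F}" "\<lambda>G. \<alpha> F * g G"]
      finite_facets \<alpha>[OF F] g by auto
  define A where "A = (x, height F x + \<sigma> * \<epsilon>)"
  have beyond: "N G \<bullet> A - c G = orient G * \<sigma> * (g G + \<epsilon>)" if "G facet_of Q" for G
    using inner_normal_above_facet[OF F that] by (simp add: A_def g_def \<sigma>_def)
  have pos: "g G + \<epsilon> > 0" if "G facet_of Q" for G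
    using g[OF that] \<open>\<epsilon> > 0\<close> by (cases "G = F") (auto simp: g_def)
  have vis: "c G < N G \<bullet> A \<longleftrightarrow> G facet_of Q \<and> orient G = \<sigma>" if "G facet_of Q" for G
    using beyond[OF that] pos[OF that] orient_cases[OF that] orient_cases[OF F] that
    by (auto simp: \<sigma>_def)
  have "\<alpha> G * (N F \<bullet> A - c F) < \<alpha> F * (N G \<bullet> A - c G)"
    if "G facet_of Q \<and> orient G = \<sigma>" "G \<noteq> F" for G
  proof -
    have "\<epsilon> * \<alpha> F > 0" using \<open>\<epsilon> > 0\<close> \<alpha>[OF F] by simp
    then have "\<alpha> G * \<epsilon> < \<alpha> F * (g G + \<epsilon>)"
      using \<epsilon>[of G] that by (simp add: algebra_simps)
    then show ?thesis
      using beyond[OF F] beyond[of G] that orient_mult_self[OF F] by (simp add: g_def \<sigma>_def)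
  qed
  then show ?thesis
    unfolding \<sigma>_def[symmetric]
    using BM_last_if_crossing_order[OF facet_hyperplane _ _ _ vis Z0] finite_facets F
    by (simp add: \<alpha>_def \<sigma>_def)
qed

lemma offset_le_if_opposite_orient:
  assumes F: "F facet_of Q" and G: "G facet_of Q"
    and "slope G = slope F" and "orient G = - orient F"
  shows "orient F * offset G \<le> orient F * offset F"
proof -
  obtain x t where xt: "(x, t) \<in> Q" using interior_nonempty interior_subset by fastforce
  have "orient F * (t - height F x) \<le> 0" "orient G * (t - height G x) \<le> 0"
    using xt F G by (simp_all add: mem_lifted_polytope_iff)
  then have "orient F * height G x \<le> orient F * height F x"
    using assms(4) by (simp add: algebra_simps)
  then show ?thesis using assms(3) by (simp add: height_def algebra_simps)
qed

lemma extreme_offset_facet_exists: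
  assumes G0: "G0 facet_of Q" "slope G0 = v"
  obtains F where "F facet_of Q" "slope F = v"
    and "\<And>G. G facet_of Q \<Longrightarrow> G \<noteq> F \<Longrightarrow> slope G = v \<Longrightarrow> orient F * offset G < orient F * offset F"
proof -
  define \<sigma> where "\<sigma> = orient G0"
  define S where "S = {G. G facet_of Q \<and> orient G = \<sigma> \<and> slope G = v}"
  have "finite S" using finite_facets by (rule finite_subset[rotated]) (auto simp: S_def)
  moreover have "G0 \<in> S" using G0 by (simp add: S_def \<sigma>_def)
  ultimately obtain F where "F \<in> S" and F_max: "\<And>G. G \<in> S \<Longrightarrow> \<sigma> * offset G \<le> \<sigma> * offset F"
    using Max_in[of "(\<lambda>G. \<sigma> * offset G) ` S"] Max_ge[of "(\<lambda>G. \<sigma> * offset G) ` S"] by fastforce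
  then have F: "F facet_of Q" "orient F = \<sigma>" "slope F = v" by (auto simp: S_def)
  have "\<sigma> \<noteq> 0" using orient_cases[OF G0(1)] by (auto simp: \<sigma>_def)
  have "\<sigma> * offset G < \<sigma> * offset F" if G: "G facet_of Q" "G \<noteq> F" "slope G = v" for G
  proof -
    have "\<sigma> * offset G \<le> \<sigma> * offset F"
    proof (cases "orient G = \<sigma>")
      case True
      then show ?thesis using F_max G by (simp add: S_def)
    next
      case False
      then have "orient G = - orient F" using orient_cases[OF G(1)] orient_cases[OF F(1)] F(2) by auto
      then show ?thesis using offset_le_if_opposite_orient[OF F(1) G(1)] G(3) F by simp
    qed
    moreover have "offset G \<noteq> offset F" using facet_eqI[OF G(1) F(1)] G F(3) by auto
    ultimately show ?thesis using \<open>\<sigma> \<noteq> 0\<close> by (simp add: order_less_le)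
  qed
  then show ?thesis by (intro that[OF F(1) F(3)]) (simp add: F(2))
qed

lemma height_extreme_facet_exists:
  assumes u: "\<And>G. G facet_of Q \<Longrightarrow> slope G \<noteq> v \<Longrightarrow> u \<bullet> slope G < u \<bullet> v"
    and G0: "G0 facet_of Q" "slope G0 = v"
  obtains F x where "F facet_of Q" "slope F = v"
    "\<And>G. G facet_of Q \<Longrightarrow> G \<noteq> F \<Longrightarrow> orient F * height G x < orient F * height F x"
proof -
  obtain F where F: "F facet_of Q" "slope F = v"
    and offset_less: "\<And>G. G facet_of Q \<Longrightarrow> G \<noteq> F \<Longrightarrow> slope G = v \<Longrightarrow>
      orient F * offset G < orient F * offset F"
    using extreme_offset_facet_exists[OF G0] by blast
  define \<sigma> where "\<sigma> = orient F"
  have fin: "finite {G. G facet_of Q \<and> G \<noteq> F}" using finite_facets by simp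
  have slope_gap: "0 \<le> u \<bullet> v - u \<bullet> slope G" if "G \<in> {G. G facet_of Q \<and> G \<noteq> F}" for G
    using u[of G] that by (cases "slope G = v") auto
  have offset_gap: "0 < \<sigma> * (offset F - offset G)"
    if "G \<in> {G. G facet_of Q \<and> G \<noteq> F}" "u \<bullet> v - u \<bullet> slope G = 0" for G
    using u[of G] offset_less[of G] that by (auto simp: \<sigma>_def right_diff_distrib)
  obtain T where T: "\<And>G. G \<in> {G. G facet_of Q \<and> G \<noteq> F} \<Longrightarrow>
      0 < T * (u \<bullet> v - u \<bullet> slope G) + \<sigma> * (offset F - offset G)"
    using large_factor_exists[of _ "\<lambda>G. u \<bullet> v - u \<bullet> slope G" "\<lambda>G. \<sigma> * (offset F - offset G)",
        OF fin slope_gap offset_gap] by blast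
  define x where "x = (\<sigma> * T) *\<^sub>R u"
  have "\<sigma> * height G x < \<sigma> * height F x" if "G facet_of Q" "G \<noteq> F" for G
  proof -
    have "\<sigma> * height F x - \<sigma> * height G x
        = (\<sigma> * \<sigma>) * T * (u \<bullet> v - u \<bullet> slope G) + \<sigma> * (offset F - offset G)"
      using F(2) by (simp add: height_def x_def inner_commute algebra_simps)
    also have "\<dots> = T * (u \<bullet> v - u \<bullet> slope G) + \<sigma> * (offset F - offset G)"
      using orient_mult_self[OF F(1)] by (simp add: \<sigma>_def)
    finally show ?thesis using T[of G] that by simp
  qed
  then show ?thesis unfolding \<sigma>_def by (rule that[OF F])
qed

lemma BM_ear_with_extreme_slope:
  assumes "v extreme_point_of convex hull (slope ` {G. G facet_of Q})"
  obtains F where "slope F = v" and "BM_last (\<lambda>G. G facet_of Q \<and> orient G = orient F) Q F"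
proof -
  have fin: "finite (slope ` {G. G facet_of Q})" using finite_facets by simp
  obtain u where u: "\<And>w. w \<in> slope ` {G. G facet_of Q} \<Longrightarrow> w \<noteq> v \<Longrightarrow> u \<bullet> w < u \<bullet> v"
    using extreme_point_of_convex_hull_exposed[OF fin assms] by blast
  then have u': "u \<bullet> slope G < u \<bullet> v" if "G facet_of Q" "slope G \<noteq> v" for G
    using that by blast
  obtain G0 where G0: "G0 facet_of Q" "slope G0 = v"
    using extreme_point_of_convex_hull[OF assms] by blast
  obtain F x where F: "F facet_of Q" "slope F = v"
    and x: "\<And>G. G facet_of Q \<Longrightarrow> G \<noteq> F \<Longrightarrow> orient F * height G x < orient F * height F x"
    using height_extreme_facet_exists[OF u' G0] by blast
  show ?thesis by (rule that[OF F(2) BM_last_if_height_extreme[OF F(1) x]])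
qed

definition BM_ears :: "real \<Rightarrow> ('a \<times> real) set set" where
  "BM_ears \<sigma> = {F. BM_last (\<lambda>G. G facet_of Q \<and> orient G = \<sigma>) Q F}"

lemma BM_ears_subset: "BM_ears \<sigma> \<subseteq> {F. F facet_of Q \<and> orient F = \<sigma>}"
  by (auto simp: BM_ears_def BM_last_def)

lemma finite_BM_ears: "finite (BM_ears \<sigma>)"
  by (rule finite_subset[OF BM_ears_subset finite_subset[OF _ finite_facets]]) auto

lemma card_extreme_slopes_le_card_BM_ears:
  "card {v. v extreme_point_of convex hull (slope ` {G. G facet_of Q})}
    \<le> card (BM_ears (-1)) + card (BM_ears 1)"
proof -
  let ?X = "{v. v extreme_point_of convex hull (slope ` {G. G facet_of Q})}"
  have "?X \<subseteq> slope ` (BM_ears (-1) \<union> BM_ears 1)"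
  proof
    fix v assume "v \<in> ?X"
    then obtain F where "slope F = v" and F: "BM_last (\<lambda>G. G facet_of Q \<and> orient G = orient F) Q F"
      using BM_ear_with_extreme_slope by blast
    moreover have "F \<in> BM_ears (orient F)" using F by (simp add: BM_ears_def)
    moreover have "orient F = 1 \<or> orient F = -1" using F orient_cases by (simp add: BM_last_def)
    ultimately show "v \<in> slope ` (BM_ears (-1) \<union> BM_ears 1)" by auto
  qed
  then have "card ?X \<le> card (slope ` (BM_ears (-1) \<union> BM_ears 1))"
    using finite_BM_ears by (simp add: card_mono)
  also have "\<dots> \<le> card (BM_ears (-1) \<union> BM_ears 1)" using finite_BM_ears by (simp add: card_image_le)
  also have "\<dots> = card (BM_ears (-1)) + card (BM_ears 1)"
  proof (rule card_Un_disjoint[OF finite_BM_ears finite_BM_ears])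
    have "BM_ears (-1) \<inter> BM_ears 1 \<subseteq> {F. orient F = -1} \<inter> {F. orient F = 1}"
      using BM_ears_subset[of "-1"] BM_ears_subset[of 1] by blast
    also have "\<dots> = {}" by auto
    finally show "BM_ears (-1) \<inter> BM_ears 1 = {}" by blast
  qed
  finally show ?thesis .
qed

theorem card_BM_ears_ge:
  "DIM('a) + 1 \<le> card (delaunay_BM_ears V) + card (upper_delaunay_BM_ears V)"
proof -
  have "lower_facet Q = (\<lambda>G. G facet_of Q \<and> orient G = -1)"
    using lower_facet_iff by (intro ext) simp
  moreover have "upper_facet Q = (\<lambda>G. G facet_of Q \<and> orient G = 1)"
    using upper_facet_iff by (intro ext) simp
  ultimately have "delaunay_BM_ears V = (\<lambda>F. fst ` F) ` BM_ears (-1)"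
    and "upper_delaunay_BM_ears V = (\<lambda>F. fst ` F) ` BM_ears 1"
    by (simp_all add: delaunay_BM_ears_def upper_delaunay_BM_ears_def BM_ears_def)
  moreover have "card ((\<lambda>F. fst ` F) ` BM_ears \<sigma>) = card (BM_ears \<sigma>)" for \<sigma>
    by (rule card_image[OF inj_on_subset[OF inj_on_fst_image BM_ears_subset]])
  moreover have "int DIM('a) + 1 \<le> int (card {v. v extreme_point_of convex hull (slope ` {G. G facet_of Q})})"
    using card_extreme_points_convex_hull_ge finite_facets aff_dim_slopes by (metis finite_imageI)
  ultimately show ?thesis using card_extreme_slopes_le_card_BM_ears by simp
qed

end

theorem mainTheorem5:
  fixes V :: "'a::euclidean_space set"
  assumes "DIM('a) \<ge> 2"
    and "generic_simplicial_polytope V"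
  shows "card (delaunay_BM_ears V) + card (upper_delaunay_BM_ears V) \<ge> DIM('a) + 1"
proof -
  \<comment> \<open>The bound holds in every dimension.\<close>
  have "\<exists>N c. facet_hyperplane (lifted_polytope V) G N c \<and> (snd N = 1 \<or> snd N = -1)"
    if "G facet_of lifted_polytope V" for G
    using lifted_facet_hyperplane_normalized[OF assms(2) that] by blast
  then obtain N c where "\<And>G. G facet_of lifted_polytope V \<Longrightarrow>
      facet_hyperplane (lifted_polytope V) G (N G) (c G) \<and> (snd (N G) = 1 \<or> snd (N G) = -1)"
    by metis
  then interpret lifted_facets V N c
    using assms(2) lifted_polytope_interior_nonempty
    by unfold_locales (auto simp: generic_simplicial_polytope_def)
  show ?thesis by (rule card_BM_ears_ge)
qed

end
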